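(* Let $E$ be a pseudo effect algebra satisfying (RDP) and let $s_1,s_2\in\mathcal S(E)$. Then $s_1\wedge s_2\in\mathcal S(E)$ if and only if $s_1=s_2$, if and only if $s_1\vee s_2\in\mathcal S(E)$ (lattice operations taken in $\mathcal J(E)$). Moreover, putting $s_\lambda:=\lambda s_1+(1-\lambda)s_2$ for $\lambda\in[0,1]$, we have $s_1\wedge s_2=\bigwedge\{s_\lambda:\lambda\in[0,1]\}$ (infimum in $\mathcal J(E)$), and this is a measure on $E$.
   Context: Pseudo effect algebra: partial algebra $(E;+,0,1)$ such that for all $a,b,c$: (i) $a+b$ and $(a+b)+c$ exist iff $b+c$ and $a+(b+c)$ exist, and then they are equal; (ii) there is exactly one $d$ and one $e$ with $a+d=e+a=1$; (iii) if $a+b$ exists there are $d,e$ with $a+b=d+a=b+e$; (iv) if $1+a$ or $a+1$ exists then $a=0$. (RDP): whenever $a_1+a_2=b_1+b_2$ there are $d_1,\dots,d_4$ with $d_1+d_2=a_1$, $d_3+d_4=a_2$, $d_1+d_3=b_1$, $d_2+d_4=b_2$. Signed measure: $m:E\to\mathbb R$ additive on defined sums; measure: nonnegative signed measure; state: measure with $s(1)=1$; $\mathcal S(E)$: set of states. $\mathcal J(E)$: signed measures that are differences of two measures, ordered by $m_1\le^+m_2$ iff $m_2-m_1$ is a measure; under (RDP) it is a Dedekind complete lattice-ordered group. *)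

theory Defs
  imports Main "HOL-Library.Lattice_Algebras"
begin

text \<open>A pseudo effect algebra is given by a carrier set E, a partial operation
  add (None = undefined), and constants z (zero) and u (one).\<close>

definition pea :: "'a set \<Rightarrow> ('a \<Rightarrow> 'a \<Rightarrow> 'a option) \<Rightarrow> 'a \<Rightarrow> 'a \<Rightarrow> bool" where
  "pea E add z u \<longleftrightarrow>
     z \<in> E \<and> u \<in> E \<and>
     (\<forall>a\<in>E. \<forall>b\<in>E. \<forall>c. add a b = Some c \<longrightarrow> c \<in> E) \<and>
     (\<forall>a\<in>E. \<forall>b\<in>E. \<forall>c\<in>E.
        ((\<exists>x. add a b = Some x \<and> add x c \<noteq> None) \<longleftrightarrow>
         (\<exists>y. add b c = Some y \<and> add a y \<noteq> None)) \<and>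
        (\<forall>x y. add a b = Some x \<and> add b c = Some y \<and> add x c \<noteq> None
                \<longrightarrow> add x c = add a y)) \<and>
     (\<forall>a\<in>E. (\<exists>!d. d \<in> E \<and> add a d = Some u) \<and> (\<exists>!e. e \<in> E \<and> add e a = Some u)) \<and>
     (\<forall>a\<in>E. \<forall>b\<in>E. \<forall>x. add a b = Some x \<longrightarrow>
        (\<exists>d\<in>E. \<exists>e\<in>E. add d a = Some x \<and> add b e = Some x)) \<and>
     (\<forall>a\<in>E. add u a \<noteq> None \<or> add a u \<noteq> None \<longrightarrow> a = z)"

definition RDP :: "'a set \<Rightarrow> ('a \<Rightarrow> 'a \<Rightarrow> 'a option) \<Rightarrow> bool" where
  "RDP E add \<longleftrightarrow>
     (\<forall>a1\<in>E. \<forall>a2\<in>E. \<forall>b1\<in>E. \<forall>b2\<in>E.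
        add a1 a2 \<noteq> None \<and> add a1 a2 = add b1 b2 \<longrightarrow>
        (\<exists>d1\<in>E. \<exists>d2\<in>E. \<exists>d3\<in>E. \<exists>d4\<in>E.
           add d1 d2 = Some a1 \<and> add d3 d4 = Some a2 \<and>
           add d1 d3 = Some b1 \<and> add d2 d4 = Some b2))"

definition signed_measure :: "'a set \<Rightarrow> ('a \<Rightarrow> 'a \<Rightarrow> 'a option) \<Rightarrow> ('a \<Rightarrow> real) \<Rightarrow> bool" where
  "signed_measure E add m \<longleftrightarrow>
     (\<forall>a\<in>E. \<forall>b\<in>E. \<forall>c. add a b = Some c \<longrightarrow> m c = m a + m b)"

definition pea_measure :: "'a set \<Rightarrow> ('a \<Rightarrow> 'a \<Rightarrow> 'a option) \<Rightarrow> ('a \<Rightarrow> real) \<Rightarrow> bool" where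
  "pea_measure E add m \<longleftrightarrow> signed_measure E add m \<and> (\<forall>a\<in>E. 0 \<le> m a)"

definition pea_state :: "'a set \<Rightarrow> ('a \<Rightarrow> 'a \<Rightarrow> 'a option) \<Rightarrow> 'a \<Rightarrow> ('a \<Rightarrow> real) \<Rightarrow> bool" where
  "pea_state E add u m \<longleftrightarrow> pea_measure E add m \<and> m u = 1"

definition JE :: "'a set \<Rightarrow> ('a \<Rightarrow> 'a \<Rightarrow> 'a option) \<Rightarrow> ('a \<Rightarrow> real) set" where
  "JE E add = {m. signed_measure E add m \<and>
      (\<exists>m1 m2. pea_measure E add m1 \<and> pea_measure E add m2 \<and> (\<forall>a\<in>E. m a = m1 a - m2 a))}"

definition leJ :: "'a set \<Rightarrow> ('a \<Rightarrow> 'a \<Rightarrow> 'a option) \<Rightarrow> ('a \<Rightarrow> real) \<Rightarrow> ('a \<Rightarrow> real) \<Rightarrow> bool" where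
  "leJ E add m1 m2 \<longleftrightarrow> pea_measure E add (\<lambda>a. m2 a - m1 a)"

definition is_infJ :: "'a set \<Rightarrow> ('a \<Rightarrow> 'a \<Rightarrow> 'a option) \<Rightarrow> ('a \<Rightarrow> real) \<Rightarrow> ('a \<Rightarrow> real) set \<Rightarrow> bool" where
  "is_infJ E add m S \<longleftrightarrow> m \<in> JE E add \<and> (\<forall>k\<in>S. leJ E add m k) \<and>
     (\<forall>k\<in>JE E add. (\<forall>s\<in>S. leJ E add k s) \<longrightarrow> leJ E add k m)"

definition is_supJ :: "'a set \<Rightarrow> ('a \<Rightarrow> 'a \<Rightarrow> 'a option) \<Rightarrow> ('a \<Rightarrow> real) \<Rightarrow> ('a \<Rightarrow> real) set \<Rightarrow> bool" where
  "is_supJ E add m S \<longleftrightarrow> m \<in> JE E add \<and> (\<forall>k\<in>S. leJ E add k m) \<and>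
     (\<forall>k\<in>JE E add. (\<forall>s\<in>S. leJ E add s k) \<longrightarrow> leJ E add m k)"

definition meetJ :: "'a set \<Rightarrow> ('a \<Rightarrow> 'a \<Rightarrow> 'a option) \<Rightarrow> ('a \<Rightarrow> real) \<Rightarrow> ('a \<Rightarrow> real) \<Rightarrow> ('a \<Rightarrow> real)" where
  "meetJ E add s1 s2 = (SOME m. is_infJ E add m {s1, s2})"

definition joinJ :: "'a set \<Rightarrow> ('a \<Rightarrow> 'a \<Rightarrow> 'a option) \<Rightarrow> ('a \<Rightarrow> real) \<Rightarrow> ('a \<Rightarrow> real) \<Rightarrow> ('a \<Rightarrow> real)" where
  "joinJ E add s1 s2 = (SOME m. is_supJ E add m {s1, s2})"

end

theory Submission imports Defs begin

text \<open>
  Under (RDP) the infimum of two measures \<mu>, \<nu> in J(E) is given by the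
  Riesz--Kantorovich formula  (\<mu> \<and> \<nu>)(a) = inf { \<mu>(a1) + \<nu>(a2) : a1 + a2 = a }.  The remaining claims are
  order-theoretic facts in J(E):  an infimum of {f, g} is also the infimum of the segment
  of convex combinations of f and g, f + g - (f \<and> g) is the supremum of {f, g}, and for
  two states the infimum takes the value 1 at the unit iff the states coincide.
\<close>

section \<open>Elementary algebra of pseudo effect algebras\<close>

lemma pea_carrier:
  assumes "pea E add z u" shows "z \<in> E" "u \<in> E"
  using assms unfolding pea_def by auto

lemma pea_closed:
  assumes "pea E add z u" "a \<in> E" "b \<in> E" "add a b = Some c"
  shows "c \<in> E"
  using assms unfolding pea_def by blast

lemma pea_assoc_axiom:
  assumes "pea E add z u" "a \<in> E" "b \<in> E" "c \<in> E"
  shows "((\<exists>x. add a b = Some x \<and> add x c \<noteq> None) \<longleftrightarrow>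
            (\<exists>y. add b c = Some y \<and> add a y \<noteq> None)) \<and>
         (\<forall>x y. add a b = Some x \<and> add b c = Some y \<and> add x c \<noteq> None
                  \<longrightarrow> add x c = add a y)"
  using assms unfolding pea_def by blast

lemma pea_assoc_right:
  assumes p: "pea E add z u" and E: "a \<in> E" "b \<in> E" "c \<in> E"
    and "add a b = Some x" "add x c = Some w"
  shows "\<exists>y. add b c = Some y \<and> add a y = Some w"
proof -
  note ax = pea_assoc_axiom[OF p E]
  then obtain y where "add b c = Some y" using assms(5,6) by auto
  then show ?thesis using ax assms(5,6) by (metis option.distinct(1))
qed

lemma pea_assoc_left:
  assumes p: "pea E add z u" and E: "a \<in> E" "b \<in> E" "c \<in> E"
    and "add b c = Some y" "add a y = Some w"
  shows "\<exists>x. add a b = Some x \<and> add x c = Some w"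
proof -
  note ax = pea_assoc_axiom[OF p E]
  then obtain x where "add a b = Some x" "add x c \<noteq> None" using assms(5,6) by auto
  then show ?thesis using ax assms(5,6) by metis
qed

lemma pea_shift_left:
  assumes "pea E add z u" "a \<in> E" "b \<in> E" "add a b = Some x"
  shows "\<exists>d\<in>E. add d a = Some x"
proof -
  have "\<forall>a\<in>E. \<forall>b\<in>E. \<forall>x. add a b = Some x \<longrightarrow>
          (\<exists>d\<in>E. \<exists>e\<in>E. add d a = Some x \<and> add b e = Some x)"
    using assms(1) unfolding pea_def by (elim conjE)
  with assms(2-4) show ?thesis by blast
qed

lemma pea_complements:
  assumes "pea E add z u" "a \<in> E"
  shows "\<exists>!d. d \<in> E \<and> add a d = Some u" "\<exists>!e. e \<in> E \<and> add e a = Some u"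
proof -
  have "\<forall>a\<in>E. (\<exists>!d. d \<in> E \<and> add a d = Some u) \<and> (\<exists>!e. e \<in> E \<and> add e a = Some u)"
    using assms(1) unfolding pea_def by (elim conjE)
  with assms(2) show "\<exists>!d. d \<in> E \<and> add a d = Some u" "\<exists>!e. e \<in> E \<and> add e a = Some u"
    by blast+
qed

lemma pea_unit_absorbs:
  assumes "pea E add z u" "a \<in> E" "add u a \<noteq> None \<or> add a u \<noteq> None"
  shows "a = z"
proof -
  have "\<forall>a\<in>E. add u a \<noteq> None \<or> add a u \<noteq> None \<longrightarrow> a = z"
    using assms(1) unfolding pea_def by (elim conjE)
  with assms(2,3) show ?thesis by blast
qed

lemma pea_unit_zero:
  assumes p: "pea E add z u"
  shows "add u z = Some u" "add z u = Some u"
proof -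
  obtain d where "d \<in> E" "add u d = Some u"
    using pea_complements(1)[OF p pea_carrier(2)[OF p]] by blast
  with pea_unit_absorbs[OF p] show "add u z = Some u" by fastforce
  obtain e where "e \<in> E" "add e u = Some u"
    using pea_complements(2)[OF p pea_carrier(2)[OF p]] by blast
  with pea_unit_absorbs[OF p] show "add z u = Some u" by fastforce
qed

text \<open>The zero is neutral on both sides; both proofs cancel a complement of a.\<close>
lemma pea_zero_right:
  assumes p: "pea E add z u" and a: "a \<in> E"
  shows "add a z = Some a"
proof -
  note zE = pea_carrier(1)[OF p]
  obtain e where e: "e \<in> E" "add e a = Some u"
    using pea_complements(2)[OF p a] by blast
  obtain y where y: "add a z = Some y" "add e y = Some u"
    using pea_assoc_right[OF p e(1) a zE e(2) pea_unit_zero(1)[OF p]] by blast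
  have "y \<in> E" using pea_closed[OF p a zE y(1)] .
  with pea_complements(1)[OF p e(1)] y(2) a e(2) have "y = a" by blast
  with y show ?thesis by simp
qed

lemma pea_zero_left:
  assumes p: "pea E add z u" and a: "a \<in> E"
  shows "add z a = Some a"
proof -
  note zE = pea_carrier(1)[OF p]
  obtain d where d: "d \<in> E" "add a d = Some u"
    using pea_complements(1)[OF p a] by blast
  obtain x where x: "add z a = Some x" "add x d = Some u"
    using pea_assoc_left[OF p zE a d(1) d(2) pea_unit_zero(2)[OF p]] by blast
  have "x \<in> E" using pea_closed[OF p zE a x(1)] .
  with pea_complements(2)[OF p d(1)] x(2) a d(2) have "x = a" by blast
  with x show ?thesis by simp
qed

text \<open>This replaces the
  commutativity one would use in an effect algebra.\<close>
lemma pea_rearrange: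
  assumes p: "pea E add z u"
    and a: "a1 \<in> E" "a2 \<in> E" "add a1 a2 = Some a"
    and b: "b1 \<in> E" "b2 \<in> E" "add b1 b2 = Some b"
    and c: "add a b = Some c"
  shows "\<exists>d\<in>E. \<exists>x t v. add a2 b1 = Some x \<and> add d a2 = Some x \<and>
           add a1 d = Some t \<and> add a2 b2 = Some v \<and> t \<in> E \<and> v \<in> E \<and> add t v = Some c"
proof -
  have bE: "b \<in> E" using pea_closed[OF p b] .
  obtain y where y: "add a2 b = Some y" "add a1 y = Some c"
    using pea_assoc_right[OF p a(1,2) bE a(3) c] by blast
  obtain x where x: "add a2 b1 = Some x" "add x b2 = Some y"
    using pea_assoc_left[OF p a(2) b y(1)] by blast
  obtain d where d: "d \<in> E" "add d a2 = Some x"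
    using pea_shift_left[OF p a(2) b(1) x(1)] by blast
  obtain v where v: "add a2 b2 = Some v" "add d v = Some y"
    using pea_assoc_right[OF p d(1) a(2) b(2) d(2) x(2)] by blast
  have vE: "v \<in> E" using pea_closed[OF p a(2) b(2) v(1)] .
  obtain t where t: "add a1 d = Some t" "add t v = Some c"
    using pea_assoc_left[OF p a(1) d(1) vE v(2) y(2)] by blast
  have "t \<in> E" using pea_closed[OF p a(1) d(1) t(1)] .
  with d x t v vE show ?thesis by blast
qed

section \<open>Signed measures and the order of J(E)\<close>

lemma signed_measureD:
  "signed_measure E add m \<Longrightarrow> a \<in> E \<Longrightarrow> b \<in> E \<Longrightarrow> add a b = Some c \<Longrightarrow> m c = m a + m b"
  unfolding signed_measure_def by blast

lemma signed_measure_zero: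
  assumes p: "pea E add z u" and m: "signed_measure E add m"
  shows "m z = 0"
  using signed_measureD[OF m pea_carrier(2,1)[OF p] pea_unit_zero(1)[OF p]] by simp

lemma signed_measure_add:
  "signed_measure E add f \<Longrightarrow> signed_measure E add g \<Longrightarrow> signed_measure E add (\<lambda>a. f a + g a)"
  unfolding signed_measure_def by auto

lemma signed_measure_diff:
  "signed_measure E add f \<Longrightarrow> signed_measure E add g \<Longrightarrow> signed_measure E add (\<lambda>a. f a - g a)"
  unfolding signed_measure_def by auto

lemma signed_measure_scale:
  "signed_measure E add f \<Longrightarrow> signed_measure E add (\<lambda>a. c * f a)"
  unfolding signed_measure_def by (auto simp: algebra_simps)

lemma pea_measure_add:
  "pea_measure E add f \<Longrightarrow> pea_measure E add g \<Longrightarrow> pea_measure E add (\<lambda>a. f a + g a)"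
  unfolding pea_measure_def using signed_measure_add by fastforce

lemma pea_measure_zero: "pea_measure E add (\<lambda>a. 0)"
  unfolding pea_measure_def signed_measure_def by auto

lemma JE_intro:
  assumes "signed_measure E add m" "pea_measure E add m1" "pea_measure E add m2"
    and "\<forall>a\<in>E. m a = m1 a - m2 a"
  shows "m \<in> JE E add"
  using assms unfolding JE_def by blast

lemma JE_signed_measure: "k \<in> JE E add \<Longrightarrow> signed_measure E add k"
  unfolding JE_def by blast

lemma pea_measure_JE: "pea_measure E add f \<Longrightarrow> f \<in> JE E add"
  by (rule JE_intro[OF _ _ pea_measure_zero]) (auto simp: pea_measure_def)

text \<open>J(E) is closed under f + g - k, the shape of every element of J(E) we build.\<close>
lemma JE_add_diff:
  assumes f: "f \<in> JE E add" and g: "g \<in> JE E add" and k: "k \<in> JE E add"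
  shows "(\<lambda>a. f a + g a - k a) \<in> JE E add"
proof -
  obtain f1 f2 where f12: "pea_measure E add f1" "pea_measure E add f2" "\<forall>a\<in>E. f a = f1 a - f2 a"
    using f unfolding JE_def by blast
  obtain g1 g2 where g12: "pea_measure E add g1" "pea_measure E add g2" "\<forall>a\<in>E. g a = g1 a - g2 a"
    using g unfolding JE_def by blast
  obtain k1 k2 where k12: "pea_measure E add k1" "pea_measure E add k2" "\<forall>a\<in>E. k a = k1 a - k2 a"
    using k unfolding JE_def by blast
  show ?thesis
  proof (rule JE_intro)
    show "signed_measure E add (\<lambda>a. f a + g a - k a)"
      by (intro signed_measure_diff signed_measure_add JE_signed_measure f g k)
    show "pea_measure E add (\<lambda>a. f1 a + g1 a + k2 a)"
      by (intro pea_measure_add f12(1) g12(1) k12(2))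
    show "pea_measure E add (\<lambda>a. f2 a + g2 a + k1 a)"
      by (intro pea_measure_add f12(2) g12(2) k12(1))
    show "\<forall>a\<in>E. f a + g a - k a = (f1 a + g1 a + k2 a) - (f2 a + g2 a + k1 a)"
      using f12(3) g12(3) k12(3) by simp
  qed
qed

lemma leJ_iff:
  assumes "signed_measure E add f" "signed_measure E add g"
  shows "leJ E add f g \<longleftrightarrow> (\<forall>a\<in>E. f a \<le> g a)"
  using signed_measure_diff[OF assms(2,1)] unfolding leJ_def pea_measure_def by auto

lemma leJ_pointwise: "leJ E add f g \<Longrightarrow> a \<in> E \<Longrightarrow> f a \<le> g a"
  unfolding leJ_def pea_measure_def by force

lemma leJ_antisym: "leJ E add f g \<Longrightarrow> leJ E add g f \<Longrightarrow> a \<in> E \<Longrightarrow> f a = g a"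
  using leJ_pointwise by (metis order_antisym)

section \<open>The Riesz--Kantorovich infimum of two measures\<close>

text \<open>The value at a is the infimum of \<mu>(a1) + \<nu>(a2) over all decompositions a = a1 + a2
  (bounded below by 0, and nonempty because a = a + 0).\<close>
definition riesz_inf ::
  "'a set \<Rightarrow> ('a \<Rightarrow> 'a \<Rightarrow> 'a option) \<Rightarrow> ('a \<Rightarrow> real) \<Rightarrow> ('a \<Rightarrow> real) \<Rightarrow> 'a \<Rightarrow> real" where
  "riesz_inf E add \<mu> \<nu> a =
     Inf {\<mu> a1 + \<nu> a2 | a1 a2. a1 \<in> E \<and> a2 \<in> E \<and> add a1 a2 = Some a}"

context
  fixes E :: "'a set" and add :: "'a \<Rightarrow> 'a \<Rightarrow> 'a option" and z u :: 'a
    and \<mu> \<nu> :: "'a \<Rightarrow> real"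
  assumes p: "pea E add z u"
    and \<mu>: "pea_measure E add \<mu>" and \<nu>: "pea_measure E add \<nu>"
begin

private lemma nonneg: "a \<in> E \<Longrightarrow> 0 \<le> \<mu> a" "a \<in> E \<Longrightarrow> 0 \<le> \<nu> a"
  using \<mu> \<nu> unfolding pea_measure_def by auto

private lemma signed: "signed_measure E add \<mu>" "signed_measure E add \<nu>"
  using \<mu> \<nu> unfolding pea_measure_def by auto

lemma riesz_inf_le:
  assumes "a1 \<in> E" "a2 \<in> E" "add a1 a2 = Some a"
  shows "riesz_inf E add \<mu> \<nu> a \<le> \<mu> a1 + \<nu> a2"
  unfolding riesz_inf_def
proof (rule cInf_lower)
  show "\<mu> a1 + \<nu> a2 \<in> {\<mu> a1 + \<nu> a2 | a1 a2. a1 \<in> E \<and> a2 \<in> E \<and> add a1 a2 = Some a}"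
    using assms by blast
  show "bdd_below {\<mu> a1 + \<nu> a2 | a1 a2. a1 \<in> E \<and> a2 \<in> E \<and> add a1 a2 = Some a}"
    unfolding bdd_below_def using nonneg by (intro exI[of _ 0]) (auto intro: add_nonneg_nonneg)
qed

lemma riesz_inf_greatest:
  assumes a: "a \<in> E"
    and bound: "\<And>a1 a2. a1 \<in> E \<Longrightarrow> a2 \<in> E \<Longrightarrow> add a1 a2 = Some a \<Longrightarrow> c \<le> \<mu> a1 + \<nu> a2"
  shows "c \<le> riesz_inf E add \<mu> \<nu> a"
  unfolding riesz_inf_def
proof (rule cInf_greatest)
  have "\<mu> a + \<nu> z \<in> {\<mu> a1 + \<nu> a2 | a1 a2. a1 \<in> E \<and> a2 \<in> E \<and> add a1 a2 = Some a}"
    using a pea_carrier(1)[OF p] pea_zero_right[OF p a] by blast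
  then show "{\<mu> a1 + \<nu> a2 | a1 a2. a1 \<in> E \<and> a2 \<in> E \<and> add a1 a2 = Some a} \<noteq> {}" by blast
qed (use bound in blast)

text \<open>Superadditivity is where (RDP) enters: a decomposition of a + b refines into
  decompositions of a and of b.\<close>
lemma riesz_inf_superadditive:
  assumes r: "RDP E add" and a: "a \<in> E" and b: "b \<in> E" and c: "add a b = Some c"
  shows "riesz_inf E add \<mu> \<nu> a + riesz_inf E add \<mu> \<nu> b \<le> riesz_inf E add \<mu> \<nu> c"
proof (rule riesz_inf_greatest)
  show "c \<in> E" using pea_closed[OF p a b c] .
  fix c1 c2 assume c12: "c1 \<in> E" "c2 \<in> E" "add c1 c2 = Some c"
  then obtain d1 d2 d3 d4 where d: "d1 \<in> E" "d2 \<in> E" "d3 \<in> E" "d4 \<in> E"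
    "add d1 d2 = Some c1" "add d3 d4 = Some c2" "add d1 d3 = Some a" "add d2 d4 = Some b"
    using r a b c unfolding RDP_def by (metis option.distinct(1))
  have "riesz_inf E add \<mu> \<nu> a \<le> \<mu> d1 + \<nu> d3" using riesz_inf_le[OF d(1,3,7)] .
  moreover have "riesz_inf E add \<mu> \<nu> b \<le> \<mu> d2 + \<nu> d4" using riesz_inf_le[OF d(2,4,8)] .
  moreover have "\<mu> c1 = \<mu> d1 + \<mu> d2" "\<nu> c2 = \<nu> d3 + \<nu> d4"
    using signed_measureD[OF signed(1) d(1,2,5)] signed_measureD[OF signed(2) d(3,4,6)] .
  ultimately show "riesz_inf E add \<mu> \<nu> a + riesz_inf E add \<mu> \<nu> b \<le> \<mu> c1 + \<nu> c2" by linarith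
qed

text \<open>Subadditivity only uses the rearrangement of a sum of two sums.\<close>
lemma riesz_inf_subadditive:
  assumes a: "a \<in> E" and b: "b \<in> E" and c: "add a b = Some c"
  shows "riesz_inf E add \<mu> \<nu> c \<le> riesz_inf E add \<mu> \<nu> a + riesz_inf E add \<mu> \<nu> b"
proof -
  have sum_bound: "riesz_inf E add \<mu> \<nu> c \<le> (\<mu> a1 + \<nu> a2) + (\<mu> b1 + \<nu> b2)"
    if a12: "a1 \<in> E" "a2 \<in> E" "add a1 a2 = Some a"
      and b12: "b1 \<in> E" "b2 \<in> E" "add b1 b2 = Some b" for a1 a2 b1 b2
  proof -
    obtain d x t v where d: "d \<in> E" "add a2 b1 = Some x" "add d a2 = Some x"
        "add a1 d = Some t" "add a2 b2 = Some v" "t \<in> E" "v \<in> E" "add t v = Some c"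
      using pea_rearrange[OF p a12 b12 c] by blast
    have "\<mu> d + \<mu> a2 = \<mu> a2 + \<mu> b1"
      using signed_measureD[OF signed(1) d(1) a12(2) d(3)] signed_measureD[OF signed(1) a12(2) b12(1) d(2)]
      by simp
    moreover have "\<mu> t = \<mu> a1 + \<mu> d" using signed_measureD[OF signed(1) a12(1) d(1) d(4)] .
    moreover have "\<nu> v = \<nu> a2 + \<nu> b2" using signed_measureD[OF signed(2) a12(2) b12(2) d(5)] .
    moreover have "riesz_inf E add \<mu> \<nu> c \<le> \<mu> t + \<nu> v" using riesz_inf_le[OF d(6,7,8)] .
    ultimately show ?thesis by linarith
  qed
  have "riesz_inf E add \<mu> \<nu> c - riesz_inf E add \<mu> \<nu> a \<le> riesz_inf E add \<mu> \<nu> b"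
  proof (rule riesz_inf_greatest[OF b])
    fix b1 b2 assume b12: "b1 \<in> E" "b2 \<in> E" "add b1 b2 = Some b"
    have "riesz_inf E add \<mu> \<nu> c - (\<mu> b1 + \<nu> b2) \<le> riesz_inf E add \<mu> \<nu> a"
      by (rule riesz_inf_greatest[OF a]) (use sum_bound[OF _ _ _ b12] in force)
    then show "riesz_inf E add \<mu> \<nu> c - riesz_inf E add \<mu> \<nu> a \<le> \<mu> b1 + \<nu> b2" by linarith
  qed
  then show ?thesis by linarith
qed

lemma riesz_inf_measure:
  assumes r: "RDP E add"
  shows "pea_measure E add (riesz_inf E add \<mu> \<nu>)"
  unfolding pea_measure_def signed_measure_def
proof (intro conjI ballI allI impI)
  fix a b c assume "a \<in> E" "b \<in> E" "add a b = Some c"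
  then show "riesz_inf E add \<mu> \<nu> c = riesz_inf E add \<mu> \<nu> a + riesz_inf E add \<mu> \<nu> b"
    using riesz_inf_superadditive[OF r] riesz_inf_subadditive by (meson order_antisym)
next
  fix a assume "a \<in> E"
  then show "0 \<le> riesz_inf E add \<mu> \<nu> a"
    by (rule riesz_inf_greatest) (use nonneg in \<open>auto intro: add_nonneg_nonneg\<close>)
qed

theorem riesz_inf_is_infJ:
  assumes r: "RDP E add"
  shows "is_infJ E add (riesz_inf E add \<mu> \<nu>) {\<mu>, \<nu>}"
proof -
  let ?m = "riesz_inf E add \<mu> \<nu>"
  have m: "pea_measure E add ?m" using riesz_inf_measure[OF r] .
  have sm: "signed_measure E add ?m" "signed_measure E add \<mu>" "signed_measure E add \<nu>"
    using m \<mu> \<nu> unfolding pea_measure_def by auto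
  have "?m a \<le> \<mu> a" "?m a \<le> \<nu> a" if a: "a \<in> E" for a
    using riesz_inf_le[OF a pea_carrier(1)[OF p] pea_zero_right[OF p a]]
      riesz_inf_le[OF pea_carrier(1)[OF p] a pea_zero_left[OF p a]]
      signed_measure_zero[OF p sm(2)] signed_measure_zero[OF p sm(3)] by auto
  then have lower: "leJ E add ?m \<mu>" "leJ E add ?m \<nu>"
    using leJ_iff[OF sm(1,2)] leJ_iff[OF sm(1,3)] by auto
  have greatest: "leJ E add k ?m" if k: "k \<in> JE E add" "leJ E add k \<mu>" "leJ E add k \<nu>" for k
  proof -
    have smk: "signed_measure E add k" using JE_signed_measure[OF k(1)] .
    have "k a \<le> ?m a" if a: "a \<in> E" for a
    proof (rule riesz_inf_greatest[OF a])
      fix a1 a2 assume a12: "a1 \<in> E" "a2 \<in> E" "add a1 a2 = Some a"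
      have "k a = k a1 + k a2" using signed_measureD[OF smk a12] .
      with leJ_pointwise[OF k(2) a12(1)] leJ_pointwise[OF k(3) a12(2)]
      show "k a \<le> \<mu> a1 + \<nu> a2" by linarith
    qed
    then show ?thesis using leJ_iff[OF smk sm(1)] by blast
  qed
  show ?thesis
    unfolding is_infJ_def using pea_measure_JE[OF m] lower greatest by auto
qed

end

section \<open>Infima and suprema of two elements of J(E)\<close>

text \<open>Since an infimum exists, the choice in meetJ picks one.\<close>
lemma meetJ_is_infJ:
  assumes "pea E add z u" "pea_measure E add \<mu>" "pea_measure E add \<nu>" "RDP E add"
  shows "is_infJ E add (meetJ E add \<mu> \<nu>) {\<mu>, \<nu>}"
  unfolding meetJ_def using riesz_inf_is_infJ[OF assms]
  by (rule someI[where P = "\<lambda>m. is_infJ E add m {\<mu>, \<nu>}"])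

text \<open>An infimum of two measures is itself a measure, since 0 is a common lower bound.\<close>
lemma infJ_measure:
  assumes inf: "is_infJ E add m {\<mu>, \<nu>}"
    and "pea_measure E add \<mu>" "pea_measure E add \<nu>"
  shows "pea_measure E add m"
proof -
  have "leJ E add (\<lambda>a. 0) \<mu>" "leJ E add (\<lambda>a. 0) \<nu>"
    using assms(2,3) unfolding leJ_def by simp_all
  with inf have "leJ E add (\<lambda>a. 0) m"
    unfolding is_infJ_def using pea_measure_JE[OF pea_measure_zero] by blast
  then show ?thesis unfolding leJ_def by simp
qed

text \<open>A lower bound of f and g lies below every convex combination of them, so the
  infimum of {f, g} is also the infimum of the segment joining f and g.\<close>
lemma infJ_segment:
  assumes inf: "is_infJ E add m {f, g}"
    and f: "signed_measure E add f" and g: "signed_measure E add g"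
  shows "is_infJ E add m {(\<lambda>a. l * f a + (1 - l) * g a) | l::real. 0 \<le> l \<and> l \<le> 1}"
  unfolding is_infJ_def
proof (intro conjI ballI impI)
  show mJ: "m \<in> JE E add" using inf unfolding is_infJ_def by blast
  have mf: "leJ E add m f" and mg: "leJ E add m g" using inf unfolding is_infJ_def by auto
  fix k assume "k \<in> {(\<lambda>a. l * f a + (1 - l) * g a) | l::real. 0 \<le> l \<and> l \<le> 1}"
  then obtain l where l: "0 \<le> l" "l \<le> 1" and k: "k = (\<lambda>a. l * f a + (1 - l) * g a)" by blast
  have "m a \<le> l * f a + (1 - l) * g a" if a: "a \<in> E" for a
  proof -
    have "l * m a \<le> l * f a" using leJ_pointwise[OF mf a] l by (simp add: mult_left_mono)
    moreover have "(1 - l) * m a \<le> (1 - l) * g a"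
      using leJ_pointwise[OF mg a] l by (simp add: mult_left_mono)
    ultimately show ?thesis by (simp add: algebra_simps)
  qed
  moreover have "signed_measure E add (\<lambda>a. l * f a + (1 - l) * g a)"
    using signed_measure_add[OF signed_measure_scale[OF f] signed_measure_scale[OF g]] .
  ultimately show "leJ E add m k"
    unfolding k using leJ_iff[OF JE_signed_measure[OF mJ]] by blast
next
  fix k assume k: "k \<in> JE E add"
    and below: "\<forall>s\<in>{(\<lambda>a. l * f a + (1 - l) * g a) | l::real. 0 \<le> l \<and> l \<le> 1}. leJ E add k s"
  have "(\<lambda>a. 1 * f a + (1 - 1) * g a) \<in> {(\<lambda>a. l * f a + (1 - l) * g a) | l::real. 0 \<le> l \<and> l \<le> 1}"
    and "(\<lambda>a. 0 * f a + (1 - 0) * g a) \<in> {(\<lambda>a. l * f a + (1 - l) * g a) | l::real. 0 \<le> l \<and> l \<le> 1}"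
    by (intro CollectI exI[of _ "1::real"], simp) (intro CollectI exI[of _ "0::real"], simp)
  with below have "leJ E add k (\<lambda>a. 1 * f a + (1 - 1) * g a)"
    and "leJ E add k (\<lambda>a. 0 * f a + (1 - 0) * g a)" by blast+
  then have "leJ E add k f" "leJ E add k g" by simp_all
  with inf k show "leJ E add k m" unfolding is_infJ_def by blast
qed

text \<open>In the lattice-ordered group J(E): f \<or> g = f + g - (f \<and> g), because k \<mapsto> f + g - k
  is an order-reversing involution of J(E) exchanging {f, g}.\<close>
lemma infJ_to_supJ:
  assumes inf: "is_infJ E add m {f, g}"
    and f: "f \<in> JE E add" and g: "g \<in> JE E add"
  shows "is_supJ E add (\<lambda>a. f a + g a - m a) {f, g}"
proof -
  let ?j = "\<lambda>a. f a + g a - m a"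
  have mJ: "m \<in> JE E add" and mf: "leJ E add m f" and mg: "leJ E add m g"
    and greatest: "\<And>k. k \<in> JE E add \<Longrightarrow> leJ E add k f \<Longrightarrow> leJ E add k g \<Longrightarrow> leJ E add k m"
    using inf unfolding is_infJ_def by auto
  have jJ: "?j \<in> JE E add" using JE_add_diff[OF f g mJ] .
  note sm = JE_signed_measure[OF f] JE_signed_measure[OF g] JE_signed_measure[OF jJ]
  have "leJ E add f ?j" "leJ E add g ?j"
    unfolding leJ_iff[OF sm(1,3)] leJ_iff[OF sm(2,3)]
    using leJ_pointwise[OF mf] leJ_pointwise[OF mg] by auto
  moreover have "leJ E add ?j k"
    if k: "k \<in> JE E add" "leJ E add f k" "leJ E add g k" for k
  proof -
    let ?k' = "\<lambda>a. f a + g a - k a"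
    have k'J: "?k' \<in> JE E add" using JE_add_diff[OF f g k(1)] .
    have "leJ E add ?k' f" "leJ E add ?k' g"
      unfolding leJ_iff[OF JE_signed_measure[OF k'J] sm(1)] leJ_iff[OF JE_signed_measure[OF k'J] sm(2)]
      using leJ_pointwise[OF k(2)] leJ_pointwise[OF k(3)] by auto
    then have k'm: "leJ E add ?k' m" using greatest[OF k'J] by blast
    show ?thesis
      unfolding leJ_iff[OF sm(3) JE_signed_measure[OF k(1)]]
    proof
      fix a assume "a \<in> E"
      with leJ_pointwise[OF k'm] show "f a + g a - m a \<le> k a" by force
    qed
  qed
  ultimately show ?thesis unfolding is_supJ_def using jJ by blast
qed

lemma joinJ_is_supJ:
  assumes "is_infJ E add m {f, g}" "f \<in> JE E add" "g \<in> JE E add"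
  shows "is_supJ E add (joinJ E add f g) {f, g}"
  unfolding joinJ_def using infJ_to_supJ[OF assms]
  by (rule someI[where P = "\<lambda>m. is_supJ E add m {f, g}"])

lemma joinJ_eq:
  assumes inf: "is_infJ E add m {f, g}"
    and f: "f \<in> JE E add" and g: "g \<in> JE E add" and a: "a \<in> E"
  shows "joinJ E add f g a = f a + g a - m a"
proof -
  have "leJ E add (joinJ E add f g) (\<lambda>a. f a + g a - m a)"
    and "leJ E add (\<lambda>a. f a + g a - m a) (joinJ E add f g)"
    using infJ_to_supJ[OF inf f g] joinJ_is_supJ[OF inf f g]
    unfolding is_supJ_def by (meson insertCI)+
  from leJ_antisym[OF this a] show ?thesis .
qed

section \<open>Infima of states\<close>

text \<open>A common lower bound of two states has value 1 at the unit only if the states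
  agree: for a + d = u, both m(a) \<le> s_i(a) and m(d) \<le> s_i(d) must be equalities.\<close>
lemma lower_bound_state_unit:
  assumes p: "pea E add z u"
    and s1: "pea_state E add u s1" and s2: "pea_state E add u s2"
    and m: "signed_measure E add m" and m1: "leJ E add m s1" and m2: "leJ E add m s2"
    and mu: "m u = 1"
  shows "\<forall>a\<in>E. s1 a = s2 a"
proof
  fix a assume a: "a \<in> E"
  obtain d where d: "d \<in> E" "add a d = Some u" using pea_complements(1)[OF p a] by blast
  have sm: "signed_measure E add s1" "signed_measure E add s2"
    and "s1 u = 1" "s2 u = 1" using s1 s2 unfolding pea_state_def pea_measure_def by auto
  moreover have "m u = m a + m d" "s1 u = s1 a + s1 d" "s2 u = s2 a + s2 d"
    using signed_measureD[OF m a d] signed_measureD[OF sm(1) a d] signed_measureD[OF sm(2) a d]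
    by simp_all
  ultimately show "s1 a = s2 a"
    using leJ_pointwise[OF m1 a] leJ_pointwise[OF m2 a] leJ_pointwise[OF m1 d(1)]
      leJ_pointwise[OF m2 d(1)] mu by linarith
qed

text \<open>Conversely, if two states agree on E, then s1 is a lower bound of both, so the
  infimum coincides with s1 on E and takes the value 1 at the unit.\<close>
lemma infJ_equal_states_unit:
  assumes inf: "is_infJ E add m {s1, s2}"
    and s1: "pea_state E add u s1" and s2: "pea_state E add u s2" and eq: "\<forall>a\<in>E. s1 a = s2 a"
    and uE: "u \<in> E"
  shows "m u = 1"
proof -
  have sm: "signed_measure E add s1" "signed_measure E add s2"
    using s1 s2 unfolding pea_state_def pea_measure_def by auto
  have "leJ E add s1 s1" "leJ E add s1 s2" using leJ_iff[OF sm(1,1)] leJ_iff[OF sm] eq by auto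
  then have "leJ E add s1 m"
    using inf pea_measure_JE[of E add s1] s1 unfolding is_infJ_def pea_state_def by blast
  moreover have "leJ E add m s1" using inf unfolding is_infJ_def by blast
  ultimately have "m u = s1 u" using leJ_antisym uE by metis
  with s1 show ?thesis unfolding pea_state_def by simp
qed

text \<open>A supremum of two elements of J(E) lies above a measure, hence is a measure.\<close>
lemma supJ_measure:
  assumes "is_supJ E add m {\<mu>, \<nu>}" and \<mu>: "pea_measure E add \<mu>"
  shows "pea_measure E add m"
proof -
  have "pea_measure E add (\<lambda>a. m a - \<mu> a)" using assms(1) unfolding is_supJ_def leJ_def by blast
  from pea_measure_add[OF this \<mu>] show ?thesis by simp
qed

theorem proposition4p3:
  fixes E :: "'a set" and add :: "'a \<Rightarrow> 'a \<Rightarrow> 'a option" and z u :: 'a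
    and s1 s2 :: "'a \<Rightarrow> real"
  assumes "pea E add z u" and "RDP E add"
    and "pea_state E add u s1" and "pea_state E add u s2"
  shows "(pea_state E add u (meetJ E add s1 s2) \<longleftrightarrow> (\<forall>a\<in>E. s1 a = s2 a))
       \<and> ((\<forall>a\<in>E. s1 a = s2 a) \<longleftrightarrow> pea_state E add u (joinJ E add s1 s2))
       \<and> is_infJ E add (meetJ E add s1 s2)
           {(\<lambda>a. l * s1 a + (1 - l) * s2 a) | l::real. 0 \<le> l \<and> l \<le> 1}
       \<and> pea_measure E add (meetJ E add s1 s2)"
proof -
  let ?M = "meetJ E add s1 s2" and ?J = "joinJ E add s1 s2"
  have uE: "u \<in> E" using pea_carrier(2)[OF assms(1)] .
  have m: "pea_measure E add s1" "pea_measure E add s2"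
    and sm: "signed_measure E add s1" "signed_measure E add s2"
    and one: "s1 u = 1" "s2 u = 1"
    using assms(3,4) unfolding pea_state_def pea_measure_def by auto
  note J = pea_measure_JE[OF m(1)] pea_measure_JE[OF m(2)]
  have inf: "is_infJ E add ?M {s1, s2}" using meetJ_is_infJ[OF assms(1) m assms(2)] .
  then have below: "leJ E add ?M s1" "leJ E add ?M s2" and smM: "signed_measure E add ?M"
    unfolding is_infJ_def by (auto intro: JE_signed_measure)
  have M: "pea_measure E add ?M" using infJ_measure[OF inf m] .
  have "?M u = 1 \<longleftrightarrow> (\<forall>a\<in>E. s1 a = s2 a)"
    using lower_bound_state_unit[OF assms(1,3,4) smM below]
      infJ_equal_states_unit[OF inf assms(3,4) _ uE] by blast
  then have meet_state: "pea_state E add u ?M \<longleftrightarrow> (\<forall>a\<in>E. s1 a = s2 a)"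
    using M unfolding pea_state_def by blast
  have "pea_measure E add ?J" using supJ_measure[OF joinJ_is_supJ[OF inf J] m(1)] .
  moreover have "?J u = 2 - ?M u" using joinJ_eq[OF inf J uE] one by simp
  ultimately have "pea_state E add u ?J \<longleftrightarrow> pea_state E add u ?M"
    using M unfolding pea_state_def by auto
  with meet_state show ?thesis using infJ_segment[OF inf sm] M by blast
qed

end
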